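(* Consider a PL+C model with $\sum_{i\in\mathcal U}p_i\ge\alpha k$ for a given $\alpha>1$. Given as input the items $\mathcal U$, the utilities $u_i$, the values $\Pr_{PLC}(\mathcal R_{i\le\ell})$ for all $i\in\mathcal U$ and $\ell=1,\dots,k$, and $\alpha$, the following algorithm returns numbers $b_i$ with $p_i\ge b_i$ for every $i\in\mathcal U$, and runs in time $O(kn^2)$. Algorithm: (1) set $b_i\gets\Pr_{PLC}(\mathcal R_{i\le k})\cdot[1-(\alpha e^{1-\alpha})^k]$ for each $i$; (2) form the directed graph $G$ on vertex set $\mathcal U$ with an edge $(i,j)$ whenever $u_i>u_j$ and there exists $\ell$ with $\Pr_{PLC}(\mathcal R_{i\le\ell})<\Pr_{PLC}(\mathcal R_{j\le\ell})$ ($G$ is acyclic); (3) for each $i$ in a topological order of $G$, for each out-neighbor $j$ of $i$, for $\ell=1,\dots,k$: let $c=\Pr_{PLC}(\mathcal R_{i\le\ell})/\Pr_{PLC}(\mathcal R_{j\le\ell})$, and if $c\le1$ set $b_j\gets\max\{b_j,\ b_i/(c-cb_i+b_i)\}$; (4) return all $b_i$.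
   Context: PL+C model: universe $\mathcal U=\{1,\dots,n\}$, fixed ranking length $k\le n$. Each item $i$ has a utility $u_i\in\mathbb R$ and a consideration probability $p_i\in(0,1]$. A consideration set $C$ is drawn by including each item independently with probability $p_i$, conditioned on $|C|\ge k$: $\Pr_C(C)=\frac{1}{z_{k,p}}\prod_{h\in C}p_h\prod_{h\notin C}(1-p_h)$ for $|C|\ge k$ (with $z_{k,p}$ the normalizing constant), and $0$ otherwise. Given $C$, a length-$k$ ranking $r$ has probability $\Pr_{PL}(r\mid C)=\prod_{t=1}^k \frac{\exp(u_{r_t})}{\sum_{h\in C\setminus\{r_1,\dots,r_{t-1}\}}\exp(u_h)}$ if all $r_t\in C$, else $0$. $\Pr_{PLC}(r)=\sum_C\Pr_C(C)\Pr_{PL}(r\mid C)$, and for a set $R$ of rankings $\Pr_{PLC}(R)=\sum_{r\in R}\Pr_{PLC}(r)$. $\mathcal R_{i\le\ell}$ is the set of length-$k$ rankings containing $i$ in one of the first $\ell$ positions. Running time counts arithmetic operations on the given numbers as unit cost. *)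

theory Defs
  imports Complex_Main
begin

definition universe :: "nat \<Rightarrow> nat set" where
  "universe n = {1..n}"

definition rankings :: "nat \<Rightarrow> nat \<Rightarrow> nat list set" where
  "rankings n k = {r. distinct r \<and> length r = k \<and> set r \<subseteq> universe n}"

definition cs_weight :: "nat \<Rightarrow> (nat \<Rightarrow> real) \<Rightarrow> nat set \<Rightarrow> real" where
  "cs_weight n p C = (\<Prod>h\<in>C. p h) * (\<Prod>h\<in>universe n - C. 1 - p h)"

definition z_norm :: "nat \<Rightarrow> nat \<Rightarrow> (nat \<Rightarrow> real) \<Rightarrow> real" where
  "z_norm n k p = (\<Sum>C\<in>{C. C \<subseteq> universe n \<and> k \<le> card C}. cs_weight n p C)"

definition Pr_C :: "nat \<Rightarrow> nat \<Rightarrow> (nat \<Rightarrow> real) \<Rightarrow> nat set \<Rightarrow> real" where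
  "Pr_C n k p C = (if C \<subseteq> universe n \<and> k \<le> card C
                   then cs_weight n p C / z_norm n k p else 0)"

definition Pr_PL :: "(nat \<Rightarrow> real) \<Rightarrow> nat set \<Rightarrow> nat list \<Rightarrow> real" where
  "Pr_PL u C r = (if set r \<subseteq> C then
      (\<Prod>t<length r. exp (u (r ! t)) / (\<Sum>h\<in>C - set (take t r). exp (u h)))
    else 0)"

definition Pr_PLC :: "nat \<Rightarrow> nat \<Rightarrow> (nat \<Rightarrow> real) \<Rightarrow> (nat \<Rightarrow> real) \<Rightarrow> nat list \<Rightarrow> real" where
  "Pr_PLC n k p u r = (\<Sum>C\<in>Pow (universe n). Pr_C n k p C * Pr_PL u C r)"

definition R_top :: "nat \<Rightarrow> nat \<Rightarrow> nat \<Rightarrow> nat \<Rightarrow> nat list set" where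
  "R_top n k i l = {r \<in> rankings n k. i \<in> set (take l r)}"

definition Pr_top :: "nat \<Rightarrow> nat \<Rightarrow> (nat \<Rightarrow> real) \<Rightarrow> (nat \<Rightarrow> real) \<Rightarrow> nat \<Rightarrow> nat \<Rightarrow> real" where
  "Pr_top n k p u i l = (\<Sum>r\<in>R_top n k i l. Pr_PLC n k p u r)"

definition G_edge :: "nat \<Rightarrow> nat \<Rightarrow> (nat \<Rightarrow> real) \<Rightarrow> (nat \<Rightarrow> nat \<Rightarrow> real) \<Rightarrow> nat \<Rightarrow> nat \<Rightarrow> bool" where
  "G_edge n k u Q i j \<longleftrightarrow> i \<in> universe n \<and> j \<in> universe n \<and> u i > u j \<and>
      (\<exists>l\<in>{1..k}. Q i l < Q j l)"

definition topo_order :: "nat \<Rightarrow> nat \<Rightarrow> (nat \<Rightarrow> real) \<Rightarrow> (nat \<Rightarrow> nat \<Rightarrow> real) \<Rightarrow> nat list \<Rightarrow> bool" where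
  "topo_order n k u Q ord \<longleftrightarrow> distinct ord \<and> set ord = universe n \<and>
     (\<forall>i j. G_edge n k u Q i j \<longrightarrow>
        (\<exists>a b. a < b \<and> b < length ord \<and> ord ! a = i \<and> ord ! b = j))"

definition init_bounds :: "nat \<Rightarrow> (nat \<Rightarrow> nat \<Rightarrow> real) \<Rightarrow> real \<Rightarrow> nat \<Rightarrow> real" where
  "init_bounds k Q \<alpha> i = Q i k * (1 - (\<alpha> * exp (1 - \<alpha>)) ^ k)"

text \<open>Step (3), instrumented with an operation counter (second component).
  Inner loop over l for a fixed edge (i,j): constant work per iteration.\<close>
definition process_edge :: "nat \<Rightarrow> (nat \<Rightarrow> nat \<Rightarrow> real) \<Rightarrow> nat \<Rightarrow> nat \<Rightarrow>
    (nat \<Rightarrow> real) \<times> nat \<Rightarrow> (nat \<Rightarrow> real) \<times> nat" where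
  "process_edge k Q i j bt = fold (\<lambda>l (b, t).
      (let c = Q i l / Q j l in
         if c \<le> 1 then b(j := max (b j) (b i / (c - c * b i + b i))) else b,
       t + 1)) [1..<Suc k] bt"

text \<open>Processing vertex i: scan the adjacency row (n operations) and treat each out-neighbor.\<close>
definition process_vertex :: "nat \<Rightarrow> nat \<Rightarrow> (nat \<Rightarrow> real) \<Rightarrow> (nat \<Rightarrow> nat \<Rightarrow> real) \<Rightarrow> nat \<Rightarrow>
    (nat \<Rightarrow> real) \<times> nat \<Rightarrow> (nat \<Rightarrow> real) \<times> nat" where
  "process_vertex n k u Q i bt =
     fold (\<lambda>j. process_edge k Q i j) (filter (G_edge n k u Q i) [1..<Suc n])
       (fst bt, snd bt + n)"

text \<open>Operation count of steps (1) and (2): n for the initialization, n*n*k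
  comparisons to build G as an adjacency matrix, and n + |E| for computing a
  topological order (e.g. Kahn's algorithm).\<close>
definition pre_cost :: "nat \<Rightarrow> nat \<Rightarrow> (nat \<Rightarrow> real) \<Rightarrow> (nat \<Rightarrow> nat \<Rightarrow> real) \<Rightarrow> nat" where
  "pre_cost n k u Q = n + n * n * k + (n + card {(i, j). G_edge n k u Q i j})"

definition plc_bounds_alg :: "nat \<Rightarrow> nat \<Rightarrow> (nat \<Rightarrow> real) \<Rightarrow> (nat \<Rightarrow> nat \<Rightarrow> real) \<Rightarrow> real \<Rightarrow>
    nat list \<Rightarrow> (nat \<Rightarrow> real) \<times> nat" where
  "plc_bounds_alg n k u Q \<alpha> ord =
     fold (\<lambda>i. process_vertex n k u Q i) ord (init_bounds k Q \<alpha>, pre_cost n k u Q)"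

end

theory Submission
  imports Defs
begin

(* Let z be the probability that the unconditioned consideration set has at least k items.
   Summing over consideration sets, z * Pr(R_{i<=l}) is a sum of weights of sets C with
   |C| >= k times the Plackett-Luce probability that i is among the first l items of a
   ranking of C; this probability vanishes unless i is in C, so z * Pr(R_{i<=l}) <= p_i,
   and a Chernoff-type estimate gives z >= 1 - (alpha e^(1 - alpha))^k. This justifies
   the initial bounds.
   For an edge (i, j) and c = Pr(R_{i<=l}) / Pr(R_{j<=l}) <= 1, split the sum according
   to whether C contains i, j or both. On sets containing both, the item of higher
   utility is more likely to be ranked early; replacing j by i in a set containing only j
   also raises that probability and multiplies the weight of the set by the odds ratio
   p_i (1 - p_j) / (p_j (1 - p_i)). Comparing the two sums gives
   odds(p_i) <= c * odds(p_j), so dividing the odds of a lower bound for p_i by c yields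
   a lower bound for p_j. Each single update thus preserves 0 <= b <= p, whatever the
   order in which the edges are processed. *)

section \<open>Plackett-Luce rankings of a finite set\<close>

definition partial_rankings :: "'a set \<Rightarrow> nat \<Rightarrow> 'a list set" where
  "partial_rankings C m = {r. distinct r \<and> length r = m \<and> set r \<subseteq> C}"

lemma finite_partial_rankings: "finite C \<Longrightarrow> finite (partial_rankings C m)"
  unfolding partial_rankings_def
  by (rule finite_subset[OF _ finite_lists_length_eq[of C m]]) auto

lemma partial_rankings_0: "partial_rankings C 0 = {[]}"
  by (auto simp: partial_rankings_def)

lemma partial_rankings_Suc:
  "partial_rankings C (Suc m) = (\<lambda>(x, r). x # r) ` (SIGMA x:C. partial_rankings (C - {x}) m)"
proof
  show "partial_rankings C (Suc m) \<subseteq> (\<lambda>(x, r). x # r) ` (SIGMA x:C. partial_rankings (C - {x}) m)"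
  proof
    fix r assume "r \<in> partial_rankings C (Suc m)"
    then obtain x r' where "r = x # r'" "distinct (x # r')" "length r' = m" "set (x # r') \<subseteq> C"
      unfolding partial_rankings_def by (auto simp: length_Suc_conv)
    then show "r \<in> (\<lambda>(x, r). x # r) ` (SIGMA x:C. partial_rankings (C - {x}) m)"
      unfolding partial_rankings_def by (auto intro!: image_eqI[where x = "(x, r')"])
  qed
qed (auto simp: partial_rankings_def)

lemma partial_rankings_empty:
  assumes "finite C" "card C < m"
  shows "partial_rankings C m = {}"
proof -
  have "length r \<le> card C" if "distinct r" "set r \<subseteq> C" for r :: "'a list"
    using card_mono[OF assms(1) that(2)] distinct_card[OF that(1)] by simp
  then show ?thesis
    using assms(2) unfolding partial_rankings_def by fastforce
qed

lemma rankings_eq_partial_rankings: "rankings n k = partial_rankings (universe n) k"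
  by (simp add: rankings_def partial_rankings_def)

definition PL_first :: "(nat \<Rightarrow> real) \<Rightarrow> nat set \<Rightarrow> nat \<Rightarrow> real" where
  "PL_first u C x = exp (u x) / (\<Sum>h\<in>C. exp (u h))"

lemma PL_first_nonneg: "0 \<le> PL_first u C x"
  by (simp add: PL_first_def sum_nonneg)

lemma PL_first_pos: "finite C \<Longrightarrow> x \<in> C \<Longrightarrow> 0 < PL_first u C x"
  unfolding PL_first_def by (intro divide_pos_pos sum_pos) auto

lemma PL_first_mono: "u x \<le> u y \<Longrightarrow> PL_first u C x \<le> PL_first u C y"
  unfolding PL_first_def by (intro divide_right_mono sum_nonneg) auto

lemma sum_PL_first:
  assumes "finite C" "C \<noteq> {}"
  shows "(\<Sum>x\<in>C. PL_first u C x) = 1"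
proof -
  have "0 < (\<Sum>h\<in>C. exp (u h))"
    using assms by (intro sum_pos) auto
  then show ?thesis
    unfolding PL_first_def sum_divide_distrib[symmetric] by simp
qed

lemma Pr_PL_nonneg: "0 \<le> Pr_PL u C r"
  unfolding Pr_PL_def by (auto intro!: prod_nonneg divide_nonneg_nonneg sum_nonneg)

lemma Pr_PL_Nil: "Pr_PL u C [] = 1"
  by (simp add: Pr_PL_def)

lemma Pr_PL_Cons:
  assumes "x \<in> C" "x \<notin> set r"
  shows "Pr_PL u C (x # r) = PL_first u C x * Pr_PL u (C - {x}) r"
proof -
  have "C - set (take (Suc t) (x # r)) = C - {x} - set (take t r)" for t
    by auto
  then have "(\<Prod>t<length (x # r). exp (u ((x # r) ! t)) / (\<Sum>h\<in>C - set (take t (x # r)). exp (u h)))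
      = PL_first u C x * (\<Prod>t<length r. exp (u (r ! t)) / (\<Sum>h\<in>C - {x} - set (take t r). exp (u h)))"
    unfolding PL_first_def by (simp only: length_Cons prod.lessThan_Suc_shift) simp
  moreover have "set (x # r) \<subseteq> C \<longleftrightarrow> set r \<subseteq> C - {x}"
    using assms by auto
  ultimately show ?thesis
    unfolding Pr_PL_def by simp
qed

lemma sum_Pr_PL_Suc:
  assumes "finite C"
  shows "(\<Sum>r\<in>partial_rankings C (Suc m). Pr_PL u C r * g r) =
    (\<Sum>x\<in>C. PL_first u C x * (\<Sum>r\<in>partial_rankings (C - {x}) m. Pr_PL u (C - {x}) r * g (x # r)))"
proof -
  have "inj_on (\<lambda>(x, r). x # r) (SIGMA x:C. partial_rankings (C - {x}) m)"
    by (auto simp: inj_on_def)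
  then have "(\<Sum>r\<in>partial_rankings C (Suc m). Pr_PL u C r * g r) =
      (\<Sum>x\<in>C. \<Sum>r\<in>partial_rankings (C - {x}) m. Pr_PL u C (x # r) * g (x # r))"
    using assms unfolding partial_rankings_Suc
    by (simp add: sum.reindex sum.Sigma finite_partial_rankings case_prod_unfold)
  also have "\<dots> = (\<Sum>x\<in>C. \<Sum>r\<in>partial_rankings (C - {x}) m.
      PL_first u C x * (Pr_PL u (C - {x}) r * g (x # r)))"
  proof (intro sum.cong refl)
    fix x r assume "x \<in> C" "r \<in> partial_rankings (C - {x}) m"
    then show "Pr_PL u C (x # r) * g (x # r) = PL_first u C x * (Pr_PL u (C - {x}) r * g (x # r))"
      by (subst Pr_PL_Cons) (auto simp: partial_rankings_def)
  qed
  finally show ?thesis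
    by (simp add: sum_distrib_left)
qed

lemma sum_Pr_PL:
  "finite C \<Longrightarrow> (\<Sum>r\<in>partial_rankings C m. Pr_PL u C r) = of_bool (m \<le> card C)"
proof (induction m arbitrary: C)
  case 0
  then show ?case by (simp add: partial_rankings_0 Pr_PL_Nil)
next
  case (Suc m)
  have "(\<Sum>r\<in>partial_rankings C (Suc m). Pr_PL u C r) =
      (\<Sum>x\<in>C. PL_first u C x * of_bool (m \<le> card (C - {x})))"
    using sum_Pr_PL_Suc[OF Suc.prems, where g = "\<lambda>_. 1"] Suc.prems by (simp add: Suc.IH)
  also have "\<dots> = (\<Sum>x\<in>C. PL_first u C x) * of_bool (Suc m \<le> card C)"
    unfolding sum_distrib_right
  proof (intro sum.cong refl)
    fix x assume "x \<in> C"
    then have "card C = Suc (card (C - {x}))"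
      using Suc.prems by (metis card_Suc_Diff1)
    then show "PL_first u C x * of_bool (m \<le> card (C - {x})) = PL_first u C x * of_bool (Suc m \<le> card C)"
      by simp
  qed
  also have "\<dots> = of_bool (Suc m \<le> card C)"
    using sum_PL_first[OF Suc.prems] by (cases "C = {}") simp_all
  finally show ?case .
qed

definition PL_top :: "(nat \<Rightarrow> real) \<Rightarrow> nat set \<Rightarrow> nat \<Rightarrow> nat \<Rightarrow> nat \<Rightarrow> real" where
  "PL_top u C m i l =
    (\<Sum>r\<in>partial_rankings C m. Pr_PL u C r * of_bool (i \<in> set (take l r)))"

lemma PL_top_nonneg: "0 \<le> PL_top u C m i l"
  unfolding PL_top_def by (intro sum_nonneg mult_nonneg_nonneg Pr_PL_nonneg) simp

lemma PL_top_le_1: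
  assumes "finite C"
  shows "PL_top u C m i l \<le> 1"
proof -
  have "PL_top u C m i l \<le> (\<Sum>r\<in>partial_rankings C m. Pr_PL u C r)"
    unfolding PL_top_def by (intro sum_mono) (simp add: Pr_PL_nonneg)
  also have "\<dots> \<le> 1"
    using assms by (simp add: sum_Pr_PL)
  finally show ?thesis .
qed

lemma PL_top_0: "PL_top u C m i 0 = 0"
  by (simp add: PL_top_def)

lemma PL_top_Nil: "PL_top u C 0 i l = 0"
  by (simp add: PL_top_def partial_rankings_0)

lemma PL_top_too_long: "finite C \<Longrightarrow> card C < m \<Longrightarrow> PL_top u C m i l = 0"
  by (simp add: PL_top_def partial_rankings_empty)

lemma PL_top_not_member: "i \<notin> C \<Longrightarrow> PL_top u C m i l = 0"
  unfolding PL_top_def partial_rankings_def by (rule sum.neutral) (auto dest: in_set_takeD)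

lemma PL_top_Suc:
  assumes "finite C" "i \<in> C" "m < card C"
  shows "PL_top u C (Suc m) i (Suc l) =
    PL_first u C i + (\<Sum>x\<in>C - {i}. PL_first u C x * PL_top u (C - {x}) m i l)"
proof -
  have "PL_top u C (Suc m) i (Suc l) =
      (\<Sum>x\<in>C. PL_first u C x * (if x = i then 1 else PL_top u (C - {x}) m i l))"
    unfolding PL_top_def sum_Pr_PL_Suc[OF assms(1)]
  proof (intro sum.cong refl)
    fix x assume "x \<in> C"
    then have "m \<le> card (C - {x})"
      using assms by (simp add: card_Diff_singleton)
    then show "PL_first u C x * (\<Sum>r\<in>partial_rankings (C - {x}) m.
          Pr_PL u (C - {x}) r * of_bool (i \<in> set (take (Suc l) (x # r)))) =
        PL_first u C x * (if x = i then 1 else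
          \<Sum>r\<in>partial_rankings (C - {x}) m. Pr_PL u (C - {x}) r * of_bool (i \<in> set (take l r)))"
      using assms(1) by (cases "x = i") (simp_all add: sum_Pr_PL)
  qed
  also have "\<dots> = PL_first u C i + (\<Sum>x\<in>C - {i}. PL_first u C x * PL_top u (C - {x}) m i l)"
    using assms by (simp add: sum.remove)
  finally show ?thesis .
qed

lemma PL_top_Suc_pair:
  assumes "finite C" "i \<in> C" "j \<in> C" "i \<noteq> j" "m < card C"
  shows "PL_top u C (Suc m) i (Suc l) = PL_first u C i + PL_first u C j * PL_top u (C - {j}) m i l
    + (\<Sum>x\<in>C - {i, j}. PL_first u C x * PL_top u (C - {x}) m i l)"
proof -
  have "C - {i} = insert j (C - {i, j})"
    using assms by auto
  then show ?thesis
    using assms by (simp add: PL_top_Suc add.assoc)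
qed

lemma PL_top_insert_Suc:
  assumes "finite S" "i \<notin> S" "m \<le> card S"
  shows "PL_top u (insert i S) (Suc m) i (Suc l) =
    (exp (u i) + (\<Sum>x\<in>S. exp (u x) * PL_top u (insert i (S - {x})) m i l)) /
    (exp (u i) + (\<Sum>x\<in>S. exp (u x)))"
proof -
  have "insert i S - {x} = insert i (S - {x})" if "x \<in> S" for x
    using that assms(2) by auto
  then have "PL_top u (insert i S) (Suc m) i (Suc l) = PL_first u (insert i S) i +
      (\<Sum>x\<in>S. PL_first u (insert i S) x * PL_top u (insert i (S - {x})) m i l)"
    using assms by (simp add: PL_top_Suc)
  then show ?thesis
    using assms by (simp add: PL_first_def add_divide_distrib sum_divide_distrib)
qed

lemma PL_top_pos:
  assumes "finite C" "i \<in> C" "0 < l" "0 < m" "m \<le> card C"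
  shows "0 < PL_top u C m i l"
proof -
  obtain l' m' where lm: "l = Suc l'" "m = Suc m'"
    using assms(3,4) by (metis gr0_implies_Suc)
  have "0 < PL_first u C i"
    using assms by (simp add: PL_first_pos)
  moreover have "0 \<le> (\<Sum>x\<in>C - {i}. PL_first u C x * PL_top u (C - {x}) m' i l')"
    by (intro sum_nonneg mult_nonneg_nonneg PL_first_nonneg PL_top_nonneg)
  ultimately show ?thesis
    using assms by (simp add: lm PL_top_Suc)
qed

lemma add_divide_add_mono:
  fixes a b c d W :: real
  assumes "0 < b" "b \<le> a" "0 \<le> d" "d \<le> c" "c \<le> W"
  shows "(b + d) / (b + W) \<le> (a + c) / (a + W)"
proof -
  have "(a + c) * (b + W) - (b + d) * (a + W) = (a - b) * (W - c) + (c - d) * (a + W)"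
    by (simp add: algebra_simps)
  also have "\<dots> \<ge> 0"
    using assms by (intro add_nonneg_nonneg mult_nonneg_nonneg) auto
  finally show ?thesis
    using assms by (simp add: divide_simps)
qed

lemma PL_top_exchange_le:
  assumes "finite S" "i \<notin> S" "j \<notin> S" "u j \<le> u i"
  shows "PL_top u (insert j S) m j l \<le> PL_top u (insert i S) m i l"
  using assms
proof (induction m arbitrary: S l)
  case 0
  then show ?case by (simp add: PL_top_Nil)
next
  case (Suc m)
  show ?case
  proof (cases "l = 0 \<or> card S < m")
    case True
    then show ?thesis
      using Suc.prems by (auto simp: PL_top_0 PL_top_too_long)
  next
    case False
    then obtain l' where l: "l = Suc l'" and m: "m \<le> card S"
      using not0_implies_Suc by auto
    define A where "A = (\<Sum>x\<in>S. exp (u x) * PL_top u (insert i (S - {x})) m i l')"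
    define B where "B = (\<Sum>x\<in>S. exp (u x) * PL_top u (insert j (S - {x})) m j l')"
    define W where "W = (\<Sum>x\<in>S. exp (u x))"
    have "B \<le> A"
      unfolding A_def B_def
      using Suc.IH[of "S - {_}" l'] Suc.prems by (intro sum_mono mult_left_mono) auto
    moreover have "A \<le> W"
      unfolding A_def W_def using Suc.prems(1)
      by (intro sum_mono) (simp add: PL_top_le_1 mult_left_le)
    moreover have "0 \<le> B"
      unfolding B_def by (intro sum_nonneg mult_nonneg_nonneg PL_top_nonneg) simp
    ultimately have "(exp (u j) + B) / (exp (u j) + W) \<le> (exp (u i) + A) / (exp (u i) + W)"
      using Suc.prems(4) by (intro add_divide_add_mono) auto
    then show ?thesis
      using Suc.prems m unfolding l A_def B_def W_def by (simp add: PL_top_insert_Suc)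
  qed
qed

lemma PL_top_mono_utility:
  assumes "finite C" "i \<in> C" "j \<in> C" "u j \<le> u i"
  shows "PL_top u C m j l \<le> PL_top u C m i l"
  using assms
proof (induction m arbitrary: C l)
  case 0
  then show ?case by (simp add: PL_top_Nil)
next
  case (Suc m)
  show ?case
  proof (cases "i = j \<or> l = 0 \<or> card C < Suc m")
    case True
    then show ?thesis
      using Suc.prems by (auto simp: PL_top_0 PL_top_too_long)
  next
    case False
    then obtain l' where l: "l = Suc l'" and m: "m < card C" and ij: "i \<noteq> j"
      using not0_implies_Suc by auto
    define S where "S = C - {i, j}"
    have S: "finite S" "i \<notin> S" "j \<notin> S" "C - {i} = insert j S" "C - {j} = insert i S"
      using Suc.prems ij unfolding S_def by auto
    define w where "w = PL_first u C"
    define a where "a = PL_top u (C - {j}) m i l'"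
    define b where "b = PL_top u (C - {i}) m j l'"
    have "b \<le> a"
      unfolding a_def b_def S(4,5) using S(1-3) Suc.prems(4) by (rule PL_top_exchange_le)
    have "b \<le> 1" "0 \<le> w j" "w j \<le> w i"
      unfolding b_def w_def using Suc.prems
      by (simp_all add: PL_top_le_1 PL_first_nonneg PL_first_mono)
    have "w j * (1 - a) \<le> w j * (1 - b)"
      using \<open>b \<le> a\<close> \<open>0 \<le> w j\<close> by (simp add: mult_left_mono)
    also have "\<dots> \<le> w i * (1 - b)"
      using \<open>b \<le> 1\<close> \<open>w j \<le> w i\<close> by (simp add: mult_right_mono)
    finally have "w j * (1 - a) \<le> w i * (1 - b)" .
    then have pair: "w j + w i * b \<le> w i + w j * a"
      by (simp add: algebra_simps)
    have rest: "(\<Sum>x\<in>S. w x * PL_top u (C - {x}) m j l') \<le> (\<Sum>x\<in>S. w x * PL_top u (C - {x}) m i l')"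
      unfolding w_def S_def using Suc.IH Suc.prems
      by (intro sum_mono mult_left_mono) (auto simp: PL_first_nonneg)
    show ?thesis
      using pair rest Suc.prems ij m
      unfolding l a_def b_def w_def S_def by (simp add: PL_top_Suc_pair insert_commute)
  qed
qed

section \<open>Consideration sets\<close>

lemma finite_universe [simp]: "finite (universe n)"
  by (simp add: universe_def)

lemma card_universe [simp]: "card (universe n) = n"
  by (simp add: universe_def)

lemma sum_cs_weight_prod:
  "(\<Sum>C\<in>Pow (universe n). cs_weight n p C * (\<Prod>x\<in>C. t x)) =
    (\<Prod>x\<in>universe n. p x * t x + (1 - p x))"
  unfolding cs_weight_def prod_add[OF finite_universe]
  by (intro sum.cong refl) (simp add: prod.distrib)

lemma sum_cs_weight: "(\<Sum>C\<in>Pow (universe n). cs_weight n p C) = 1"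
  using sum_cs_weight_prod[of n p "\<lambda>_. 1"] by simp

lemma sum_cs_weight_member:
  assumes "i \<in> universe n"
  shows "(\<Sum>C\<in>Pow (universe n). cs_weight n p C * of_bool (i \<in> C)) = p i"
proof -
  have "(\<Prod>x\<in>C. if x = i then 0 else 1 :: real) = of_bool (i \<notin> C)" if "finite C" for C
  proof (cases "i \<in> C")
    case True
    then show ?thesis using that by (simp add: prod_zero_iff)
  next
    case False
    then show ?thesis by (auto intro: prod.neutral)
  qed
  then have "(\<Sum>C\<in>Pow (universe n). cs_weight n p C * of_bool (i \<notin> C)) =
      (\<Sum>C\<in>Pow (universe n). cs_weight n p C * (\<Prod>x\<in>C. if x = i then 0 else 1))"
    by (intro sum.cong refl) (simp add: finite_subset)
  also have "\<dots> = (\<Prod>x\<in>universe n. p x * (if x = i then 0 else 1) + (1 - p x))"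
    by (rule sum_cs_weight_prod)
  also have "\<dots> = (\<Prod>x\<in>universe n. if x = i then 1 - p i else 1)"
    by (intro prod.cong) auto
  also have "\<dots> = 1 - p i"
    using assms by (simp add: prod.If_cases)
  finally have "(\<Sum>C\<in>Pow (universe n). cs_weight n p C * of_bool (i \<notin> C)) = 1 - p i" .
  moreover have "cs_weight n p C * of_bool (i \<in> C) = cs_weight n p C - cs_weight n p C * of_bool (i \<notin> C)"
    for C
    by simp
  ultimately show ?thesis
    by (simp add: sum_subtractf sum_cs_weight)
qed

lemma cs_weight_nonneg:
  assumes "\<forall>x\<in>universe n. 0 \<le> p x \<and> p x \<le> 1" "C \<subseteq> universe n"
  shows "0 \<le> cs_weight n p C"
  unfolding cs_weight_def using assms
  by (intro mult_nonneg_nonneg prod_nonneg) (auto simp: subset_iff)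

lemma cs_weight_pos:
  assumes "\<forall>x\<in>C. 0 < p x" "\<forall>x\<in>universe n - C. p x < 1"
  shows "0 < cs_weight n p C"
  unfolding cs_weight_def using assms by (intro mult_pos_pos prod_pos) auto

lemma cs_weight_insert:
  assumes "x \<in> universe n" "x \<notin> S" "S \<subseteq> universe n"
  shows "(1 - p x) * cs_weight n p (insert x S) = p x * cs_weight n p S"
proof -
  let ?P = "\<Prod>h\<in>S. p h" and ?Q = "\<Prod>h\<in>universe n - insert x S. 1 - p h"
  have "finite S"
    using assms(3) by (rule finite_subset) simp
  then have "cs_weight n p (insert x S) = p x * ?P * ?Q"
    unfolding cs_weight_def using assms(2) by simp
  moreover have "cs_weight n p S = ?P * ((1 - p x) * ?Q)"
  proof -
    have split: "universe n - S = insert x (universe n - insert x S)"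
      using assms by auto
    show ?thesis
      unfolding cs_weight_def split by simp
  qed
  ultimately show ?thesis
    by simp
qed

lemma prod_pgf_le_exp:
  fixes p :: "'a \<Rightarrow> real"
  assumes "\<forall>x\<in>A. 0 \<le> p x \<and> p x \<le> 1" "0 \<le> t"
  shows "(\<Prod>x\<in>A. p x * t + (1 - p x)) \<le> exp ((t - 1) * (\<Sum>x\<in>A. p x))"
proof -
  have "(\<Prod>x\<in>A. p x * t + (1 - p x)) \<le> (\<Prod>x\<in>A. exp (p x * (t - 1)))"
  proof (rule prod_mono)
    fix x assume "x \<in> A"
    then have "0 \<le> p x * t + (1 - p x)"
      using assms by simp
    moreover have "p x * t + (1 - p x) \<le> exp (p x * (t - 1))"
      using exp_ge_add_one_self[of "p x * (t - 1)"] by (simp add: algebra_simps)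
    ultimately show "0 \<le> p x * t + (1 - p x) \<and> p x * t + (1 - p x) \<le> exp (p x * (t - 1))" ..
  qed
  also have "\<dots> = exp ((t - 1) * (\<Sum>x\<in>A. p x))"
    by (cases "finite A") (simp_all add: exp_sum sum_distrib_left mult.commute)
  finally show ?thesis .
qed

(* The unnormalised law of the consideration set:
   Pr_C n k p C = cond_weight n k p C / z_norm n k p for C within the universe. *)
definition cond_weight :: "nat \<Rightarrow> nat \<Rightarrow> (nat \<Rightarrow> real) \<Rightarrow> nat set \<Rightarrow> real" where
  "cond_weight n k p C = cs_weight n p C * of_bool (k \<le> card C)"

lemma z_norm_eq_sum_cond_weight: "z_norm n k p = (\<Sum>C\<in>Pow (universe n). cond_weight n k p C)"
proof -
  have "{C. C \<subseteq> universe n \<and> k \<le> card C} = Pow (universe n) \<inter> {C. k \<le> card C}"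
    by auto
  then show ?thesis
    unfolding z_norm_def cond_weight_def by (auto simp: sum.inter_restrict intro!: sum.cong)
qed

lemma z_norm_lower_bound:
  assumes p: "\<forall>x\<in>universe n. 0 \<le> p x \<and> p x \<le> 1"
    and \<alpha>: "1 \<le> \<alpha>" and sum_p: "\<alpha> * real k \<le> (\<Sum>x\<in>universe n. p x)"
  shows "1 - (\<alpha> * exp (1 - \<alpha>)) ^ k \<le> z_norm n k p"
proof -
  let ?U = "universe n"
  have "z_norm n k p + (\<Sum>C\<in>Pow ?U. cs_weight n p C * of_bool (card C < k)) =
      (\<Sum>C\<in>Pow ?U. cs_weight n p C)"
    unfolding z_norm_eq_sum_cond_weight cond_weight_def sum.distrib[symmetric]
    by (intro sum.cong refl) auto
  then have "1 - z_norm n k p = (\<Sum>C\<in>Pow ?U. cs_weight n p C * of_bool (card C < k))"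
    by (simp add: sum_cs_weight)
  also have "\<dots> \<le> (\<Sum>C\<in>Pow ?U. cs_weight n p C * ((\<Prod>x\<in>C. 1 / \<alpha>) * \<alpha> ^ k))"
  proof (intro sum_mono mult_left_mono)
    fix C assume C: "C \<in> Pow ?U"
    then show "0 \<le> cs_weight n p C"
      using p by (simp add: cs_weight_nonneg)
    show "of_bool (card C < k) \<le> (\<Prod>x\<in>C. 1 / \<alpha>) * \<alpha> ^ k"
    proof (cases "card C < k")
      case True
      then have "\<alpha> ^ card C \<le> \<alpha> ^ k"
        using \<alpha> by (intro power_increasing) auto
      then show ?thesis
        using True \<alpha> by (simp add: power_one_over divide_simps)
    qed (use \<alpha> in simp)
  qed
  also have "\<dots> = \<alpha> ^ k * (\<Prod>x\<in>?U. p x * (1 / \<alpha>) + (1 - p x))"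
    unfolding sum_cs_weight_prod[symmetric] by (simp add: sum_distrib_left mult_ac)
  also have "\<dots> \<le> \<alpha> ^ k * exp ((1 / \<alpha> - 1) * (\<alpha> * real k))"
  proof (intro mult_left_mono order.trans[OF prod_pgf_le_exp])
    show "exp ((1 / \<alpha> - 1) * sum p ?U) \<le> exp ((1 / \<alpha> - 1) * (\<alpha> * real k))"
      using \<alpha> sum_p by (simp add: mult_left_mono_neg)
  qed (use p \<alpha> in auto)
  also have "\<dots> = (\<alpha> * exp (1 - \<alpha>)) ^ k"
    using \<alpha> by (simp add: power_mult_distrib exp_of_nat_mult[symmetric] algebra_simps)
  finally show ?thesis
    by simp
qed

lemma cond_weight_exchange:
  assumes "i \<in> universe n" "j \<in> universe n" "i \<notin> S" "j \<notin> S" "S \<subseteq> universe n"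
  shows "p j * (1 - p i) * cond_weight n k p (insert i S) =
    p i * (1 - p j) * cond_weight n k p (insert j S)"
proof -
  have "finite S"
    using assms(5) by (rule finite_subset) simp
  then have "card (insert i S) = card (insert j S)"
    using assms(3,4) by simp
  moreover have "p j * ((1 - p i) * cs_weight n p (insert i S)) =
      p i * ((1 - p j) * cs_weight n p (insert j S))"
    using assms by (simp add: cs_weight_insert)
  ultimately show ?thesis
    unfolding cond_weight_def by (simp add: mult_ac)
qed

lemma sum_cond_weight_exchange:
  assumes "i \<in> universe n" "j \<in> universe n"
  shows "p j * (1 - p i) * (\<Sum>S\<in>Pow (universe n - {i, j}). cond_weight n k p (insert i S) * g S) =
    p i * (1 - p j) * (\<Sum>S\<in>Pow (universe n - {i, j}). cond_weight n k p (insert j S) * g S)"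
  unfolding sum_distrib_left
proof (intro sum.cong refl)
  fix S assume "S \<in> Pow (universe n - {i, j})"
  then have "p j * (1 - p i) * cond_weight n k p (insert i S) =
      p i * (1 - p j) * cond_weight n k p (insert j S)"
    using assms by (intro cond_weight_exchange) auto
  then show "p j * (1 - p i) * (cond_weight n k p (insert i S) * g S) =
      p i * (1 - p j) * (cond_weight n k p (insert j S) * g S)"
    by (simp add: mult.assoc[symmetric])
qed

lemma sum_Pow_insert:
  assumes "finite A" "a \<notin> A"
  shows "(\<Sum>C\<in>Pow (insert a A). g C) = (\<Sum>S\<in>Pow A. g S + g (insert a S))"
proof -
  have "inj_on (insert a) (Pow A)"
    using assms(2) by (auto simp: inj_on_def)
  moreover have "Pow A \<inter> insert a ` Pow A = {}"
    using assms(2) by auto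
  ultimately show ?thesis
    using assms(1) by (simp add: Pow_insert sum.union_disjoint sum.reindex sum.distrib)
qed

lemma mult_exp_1_minus_le_1: "x * exp (1 - x) \<le> (1 :: real)"
proof -
  have "x * exp (1 - x) \<le> exp (x - 1) * exp (1 - x)"
    using exp_ge_add_one_self[of "x - 1"] by (intro mult_right_mono) simp_all
  then show ?thesis
    by (simp add: exp_add[symmetric])
qed

section \<open>Top-l probabilities in the PL+C model\<close>

lemma sum_R_top_Pr_PL:
  assumes "C \<subseteq> universe n"
  shows "(\<Sum>r\<in>R_top n k i l. Pr_PL u C r) = PL_top u C k i l"
proof -
  let ?F = "partial_rankings C k \<inter> {r. i \<in> set (take l r)}"
  have "finite C"
    using assms by (rule finite_subset) simp
  have "PL_top u C k i l = (\<Sum>r\<in>partial_rankings C k. if r \<in> {r. i \<in> set (take l r)} then Pr_PL u C r else 0)"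
    unfolding PL_top_def by (intro sum.cong refl) simp
  also have "\<dots> = (\<Sum>r\<in>?F. Pr_PL u C r)"
    using \<open>finite C\<close> by (simp only: sum.inter_restrict finite_partial_rankings)
  also have "\<dots> = (\<Sum>r\<in>R_top n k i l. Pr_PL u C r)"
  proof (rule sum.mono_neutral_left)
    show "finite (R_top n k i l)"
      unfolding R_top_def rankings_eq_partial_rankings by (simp add: finite_partial_rankings)
    show "?F \<subseteq> R_top n k i l"
      using assms by (auto simp: partial_rankings_def R_top_def rankings_def)
    show "\<forall>r\<in>R_top n k i l - ?F. Pr_PL u C r = 0"
      by (auto simp: partial_rankings_def R_top_def rankings_def Pr_PL_def)
  qed
  finally show ?thesis ..
qed

(* The comparison behind odds_mult_Pr_top_le: z a and z b are split into the contributions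
   X, Y of consideration sets containing only i, resp. only j, and A, B of those containing
   both. *)
lemma mult_le_mult_of_decomposition:
  fixes z a b X X' Y A B P R :: real
  assumes "z * a = X + A" "z * b = Y + B" "0 \<le> B" "B \<le> A" "X' \<le> X" "0 < X"
    "P * X' = R * Y" "0 \<le> P" "0 < z" "a \<le> b"
  shows "R * b \<le> P * a"
proof -
  have "X + A \<le> Y + B"
    using assms(1,2,9,10) by (metis mult_left_mono less_imp_le)
  then have "X \<le> Y"
    using assms(4) by linarith
  then have "X * B \<le> Y * A"
    using assms(3,4,6) by (intro mult_mono) auto
  then have "z * (X * b) \<le> z * (a * Y)"
    using assms(1,2) by (simp add: algebra_simps)
  then have "X * b \<le> a * Y"
    using assms(9) by simp
  have "0 \<le> z * b"
    using assms(2,3,6) \<open>X \<le> Y\<close> by simp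
  then have "0 \<le> b"
    using assms(9) by (simp add: zero_le_mult_iff)
  have "R * b * Y = P * X' * b"
    using assms(7) by (simp add: mult_ac)
  also have "\<dots> \<le> P * X * b"
    using assms(5,8) \<open>0 \<le> b\<close> by (intro mult_right_mono mult_left_mono)
  also have "\<dots> \<le> P * a * Y"
    using \<open>X * b \<le> a * Y\<close> assms(8) by (simp add: mult_left_mono mult.assoc)
  finally show ?thesis
    using \<open>X \<le> Y\<close> assms(6) by simp
qed

locale plc_model =
  fixes n k :: nat and p :: "nat \<Rightarrow> real"
  assumes k_le_n: "k \<le> n" and p_range: "\<forall>i\<in>universe n. 0 < p i \<and> p i \<le> 1"
begin

lemma p_unit_interval: "\<forall>i\<in>universe n. 0 \<le> p i \<and> p i \<le> 1"
  using p_range by auto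

lemma cond_weight_nonneg: "C \<subseteq> universe n \<Longrightarrow> 0 \<le> cond_weight n k p C"
  unfolding cond_weight_def using p_unit_interval by (simp add: cs_weight_nonneg)

lemma cond_weight_universe_pos: "0 < cond_weight n k p (universe n)"
  unfolding cond_weight_def using k_le_n p_range by (simp add: cs_weight_pos)

lemma z_norm_pos: "0 < z_norm n k p"
proof -
  have "cond_weight n k p (universe n) \<le> z_norm n k p"
    unfolding z_norm_eq_sum_cond_weight
    by (rule member_le_sum) (auto intro: cond_weight_nonneg)
  then show ?thesis
    using cond_weight_universe_pos by linarith
qed

lemma z_norm_mult_Pr_top:
  "z_norm n k p * Pr_top n k p u i l =
    (\<Sum>C\<in>Pow (universe n). cond_weight n k p C * PL_top u C k i l)"
proof -
  have "Pr_top n k p u i l = (\<Sum>C\<in>Pow (universe n). \<Sum>r\<in>R_top n k i l. Pr_C n k p C * Pr_PL u C r)"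
    unfolding Pr_top_def Pr_PLC_def by (rule sum.swap)
  also have "\<dots> = (\<Sum>C\<in>Pow (universe n). cond_weight n k p C / z_norm n k p * PL_top u C k i l)"
    by (intro sum.cong refl)
      (auto simp: sum_distrib_left[symmetric] sum_R_top_Pr_PL Pr_C_def cond_weight_def)
  finally show ?thesis
    using z_norm_pos by (simp add: sum_distrib_left)
qed

lemma Pr_top_nonneg: "0 \<le> Pr_top n k p u i l"
proof -
  have "0 \<le> z_norm n k p * Pr_top n k p u i l"
    unfolding z_norm_mult_Pr_top
    by (intro sum_nonneg mult_nonneg_nonneg cond_weight_nonneg PL_top_nonneg) simp
  then show ?thesis
    using z_norm_pos by (simp add: zero_le_mult_iff)
qed

lemma Pr_top_pos:
  assumes "i \<in> universe n" "0 < l" "l \<le> k"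
  shows "0 < Pr_top n k p u i l"
proof -
  have "cond_weight n k p (universe n) * PL_top u (universe n) k i l \<le> z_norm n k p * Pr_top n k p u i l"
    unfolding z_norm_mult_Pr_top
    by (rule member_le_sum) (auto intro!: mult_nonneg_nonneg cond_weight_nonneg PL_top_nonneg)
  moreover have "0 < cond_weight n k p (universe n) * PL_top u (universe n) k i l"
    using assms k_le_n by (intro mult_pos_pos cond_weight_universe_pos PL_top_pos) auto
  ultimately have "0 < z_norm n k p * Pr_top n k p u i l"
    by linarith
  then show ?thesis
    using z_norm_pos by (simp add: zero_less_mult_iff)
qed

lemma z_norm_mult_Pr_top_le:
  assumes "i \<in> universe n"
  shows "z_norm n k p * Pr_top n k p u i l \<le> p i"
proof -
  have "z_norm n k p * Pr_top n k p u i l \<le>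
      (\<Sum>C\<in>Pow (universe n). cs_weight n p C * of_bool (i \<in> C))"
    unfolding z_norm_mult_Pr_top
  proof (intro sum_mono)
    fix C assume C: "C \<in> Pow (universe n)"
    then have "finite C"
      by (simp add: finite_subset)
    have "cond_weight n k p C * PL_top u C k i l \<le> cs_weight n p C * 1"
      using C \<open>finite C\<close> p_unit_interval
      by (intro mult_mono) (auto simp: cond_weight_def cs_weight_nonneg PL_top_nonneg PL_top_le_1)
    then show "cond_weight n k p C * PL_top u C k i l \<le> cs_weight n p C * of_bool (i \<in> C)"
      by (cases "i \<in> C") (simp_all add: PL_top_not_member)
  qed
  also have "\<dots> = p i"
    using assms by (rule sum_cs_weight_member)
  finally show ?thesis .
qed

lemma init_bounds_le:
  assumes "1 \<le> \<alpha>" "\<alpha> * real k \<le> (\<Sum>i\<in>universe n. p i)" "i \<in> universe n"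
  shows "init_bounds k (Pr_top n k p u) \<alpha> i \<le> p i"
proof -
  have "init_bounds k (Pr_top n k p u) \<alpha> i \<le> Pr_top n k p u i k * z_norm n k p"
    unfolding init_bounds_def using assms(1,2) p_unit_interval
    by (intro mult_left_mono z_norm_lower_bound Pr_top_nonneg) auto
  also have "\<dots> \<le> p i"
    using z_norm_mult_Pr_top_le[OF assms(3)] by (simp add: mult.commute)
  finally show ?thesis .
qed

lemma init_bounds_nonneg:
  assumes "0 \<le> \<alpha>"
  shows "0 \<le> init_bounds k (Pr_top n k p u) \<alpha> i"
proof -
  have "(\<alpha> * exp (1 - \<alpha>)) ^ k \<le> 1"
    using assms by (simp add: mult_exp_1_minus_le_1 power_le_one)
  then show ?thesis
    unfolding init_bounds_def by (simp add: Pr_top_nonneg)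
qed

lemma cond_weight_PL_top_mono_utility:
  assumes "C \<subseteq> universe n" "i \<in> C" "j \<in> C" "u j \<le> u i"
  shows "cond_weight n k p C * PL_top u C k j l \<le> cond_weight n k p C * PL_top u C k i l"
proof -
  have "finite C"
    using assms(1) by (rule finite_subset) simp
  then show ?thesis
    using assms by (intro mult_left_mono PL_top_mono_utility cond_weight_nonneg)
qed

lemma cond_weight_PL_top_exchange_le:
  assumes "S \<subseteq> universe n" "i \<in> universe n" "i \<notin> S" "j \<notin> S" "u j \<le> u i"
  shows "cond_weight n k p (insert i S) * PL_top u (insert j S) k j l \<le>
    cond_weight n k p (insert i S) * PL_top u (insert i S) k i l"
proof -
  have "finite S"
    using assms(1) by (rule finite_subset) simp
  then show ?thesis
    using assms by (intro mult_left_mono PL_top_exchange_le cond_weight_nonneg) auto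
qed

lemma sum_cond_weight_PL_top_pos:
  assumes "k < n" "i \<in> universe n" "j \<in> universe n" "i \<noteq> j" "p j < 1" "0 < l" "l \<le> k"
  shows "0 < (\<Sum>S\<in>Pow (universe n - {i, j}).
    cond_weight n k p (insert i S) * PL_top u (insert i S) k i l)"
proof -
  have U: "universe n - {j} = insert i (universe n - {i, j})"
    using assms(2,4) by auto
  have "0 < cs_weight n p (universe n - {j})"
    using assms(3,5) p_range by (intro cs_weight_pos) auto
  moreover have "k \<le> card (universe n - {j})"
    using assms(1,3) by simp
  moreover have "0 < PL_top u (universe n - {j}) k i l"
    using assms by (intro PL_top_pos) auto
  ultimately have "0 < cond_weight n k p (universe n - {j}) * PL_top u (universe n - {j}) k i l"
    unfolding cond_weight_def by simp
  also have "\<dots> \<le> (\<Sum>S\<in>Pow (universe n - {i, j}).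
      cond_weight n k p (insert i S) * PL_top u (insert i S) k i l)"
    unfolding U using assms(2)
    by (intro member_le_sum) (auto intro!: mult_nonneg_nonneg cond_weight_nonneg PL_top_nonneg)
  finally show ?thesis .
qed

lemma Pr_top_mono_utility_if_full:
  assumes "k = n" "i \<in> universe n" "j \<in> universe n" "u j \<le> u i"
  shows "Pr_top n k p u j l \<le> Pr_top n k p u i l"
proof -
  have "cond_weight n k p C * PL_top u C k j l \<le> cond_weight n k p C * PL_top u C k i l"
    if C: "C \<in> Pow (universe n)" for C
  proof (cases "k \<le> card C")
    case True
    then have "C = universe n"
      using C assms(1) by (intro card_seteq) auto
    then show ?thesis
      using assms by (intro cond_weight_PL_top_mono_utility) auto
  qed (simp add: cond_weight_def)
  then have "z_norm n k p * Pr_top n k p u j l \<le> z_norm n k p * Pr_top n k p u i l"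
    unfolding z_norm_mult_Pr_top by (rule sum_mono)
  then show ?thesis
    using z_norm_pos by simp
qed

lemma G_edge_imp_less:
  assumes "G_edge n k u (Pr_top n k p u) i j"
  shows "k < n"
proof (rule ccontr)
  assume "\<not> k < n"
  then have "Pr_top n k p u j l \<le> Pr_top n k p u i l" for l
    using assms k_le_n Pr_top_mono_utility_if_full unfolding G_edge_def by auto
  then show False
    using assms unfolding G_edge_def by (auto simp: not_less[symmetric])
qed

lemma z_norm_mult_Pr_top_split:
  assumes "x \<in> universe n" "y \<in> universe n" "x \<noteq> y"
  shows "z_norm n k p * Pr_top n k p u x l =
    (\<Sum>S\<in>Pow (universe n - {x, y}).
      cond_weight n k p (insert x S) * PL_top u (insert x S) k x l +
      cond_weight n k p (insert x (insert y S)) * PL_top u (insert x (insert y S)) k x l)"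
proof -
  define V where "V = universe n - {x, y}"
  define f where "f C = cond_weight n k p C * PL_top u C k x l" for C
  have U: "universe n = insert x (insert y V)"
    using assms unfolding V_def by auto
  have V: "finite V" "x \<notin> V" "y \<notin> V"
    unfolding V_def by auto
  have "z_norm n k p * Pr_top n k p u x l = (\<Sum>C\<in>Pow (insert x (insert y V)). f C)"
    unfolding z_norm_mult_Pr_top f_def U ..
  also have "\<dots> = (\<Sum>T\<in>Pow (insert y V). f T + f (insert x T))"
    using V assms(3) by (intro sum_Pow_insert) auto
  also have "\<dots> = (\<Sum>T\<in>Pow (insert y V). f (insert x T))"
  proof (intro sum.cong refl)
    fix T assume "T \<in> Pow (insert y V)"
    then have "x \<notin> T"
      using V assms(3) by auto
    then show "f T + f (insert x T) = f (insert x T)"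
      by (simp add: f_def PL_top_not_member)
  qed
  also have "\<dots> = (\<Sum>S\<in>Pow V. f (insert x S) + f (insert x (insert y S)))"
    using V by (intro sum_Pow_insert) auto
  finally show ?thesis
    unfolding f_def V_def .
qed

lemma odds_mult_Pr_top_le:
  assumes "k < n" "i \<in> universe n" "j \<in> universe n" "i \<noteq> j" "u j \<le> u i" "0 < l" "l \<le> k"
    and "Pr_top n k p u i l \<le> Pr_top n k p u j l"
  shows "p i * (1 - p j) * Pr_top n k p u j l \<le> p j * (1 - p i) * Pr_top n k p u i l"
proof (cases "p j = 1")
  case True
  then show ?thesis
    using assms p_range by (simp add: Pr_top_nonneg)
next
  case False
  then have "p j < 1"
    using assms(3) p_range by (simp add: less_le)
  define V where "V = universe n - {i, j}"
  have V: "V \<subseteq> universe n" "i \<notin> V" "j \<notin> V" "finite V"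
    unfolding V_def by auto
  let ?w = "cond_weight n k p" and ?q = "\<lambda>C x. PL_top u C k x l"
  define X where "X = (\<Sum>S\<in>Pow V. ?w (insert i S) * ?q (insert i S) i)"
  define X' where "X' = (\<Sum>S\<in>Pow V. ?w (insert i S) * ?q (insert j S) j)"
  define Y where "Y = (\<Sum>S\<in>Pow V. ?w (insert j S) * ?q (insert j S) j)"
  define A where "A = (\<Sum>S\<in>Pow V. ?w (insert i (insert j S)) * ?q (insert i (insert j S)) i)"
  define B where "B = (\<Sum>S\<in>Pow V. ?w (insert i (insert j S)) * ?q (insert i (insert j S)) j)"
  have "z_norm n k p * Pr_top n k p u i l = X + A"
    unfolding X_def A_def V_def using assms by (simp add: z_norm_mult_Pr_top_split sum.distrib)
  moreover have "z_norm n k p * Pr_top n k p u j l = Y + B"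
    unfolding Y_def B_def V_def using assms
    by (simp add: z_norm_mult_Pr_top_split[of j i] sum.distrib insert_commute)
  moreover have "0 \<le> B"
    unfolding B_def using V assms(2,3)
    by (intro sum_nonneg mult_nonneg_nonneg cond_weight_nonneg PL_top_nonneg) auto
  moreover have "B \<le> A"
    unfolding A_def B_def using V assms(2,3,5)
    by (intro sum_mono cond_weight_PL_top_mono_utility) auto
  moreover have "X' \<le> X"
    unfolding X_def X'_def using V assms(2,5)
    by (intro sum_mono cond_weight_PL_top_exchange_le) auto
  moreover have "0 < X"
    unfolding X_def V_def using assms \<open>p j < 1\<close> by (intro sum_cond_weight_PL_top_pos)
  moreover have "p j * (1 - p i) * X' = p i * (1 - p j) * Y"
    unfolding X'_def Y_def V_def using assms(2,3) by (rule sum_cond_weight_exchange)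
  moreover have "0 \<le> p j * (1 - p i)"
    using assms(2,3) p_range by (simp add: less_imp_le)
  ultimately show ?thesis
    using z_norm_pos assms(8) by (intro mult_le_mult_of_decomposition)
qed

end

section \<open>The bound propagation algorithm\<close>

(* b / (c - c b + b) is the number whose odds are those of b divided by c. *)
lemma odds_update_le:
  fixes b c q q' :: real
  assumes "0 \<le> b" "b \<le> q" "q \<le> 1" "0 \<le> q'" "q' \<le> 1" "0 \<le> c" "c \<le> 1"
    and odds: "q * (1 - q') \<le> c * q' * (1 - q)"
  shows "b / (c - c * b + b) \<le> q'"
proof (cases "c - c * b + b = 0")
  case False
  have "c * b \<le> c"
    using assms(2,3,6) by (simp add: mult_left_le)
  with False have pos: "0 < c - c * b + b"
    using assms(1) by linarith
  have "b * (1 - q' * (1 - c)) \<le> q * (1 - q' * (1 - c))"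
    using assms(2,4-7) by (intro mult_right_mono) (simp_all add: mult_le_one)
  also have "\<dots> \<le> q' * c"
    using odds by (simp add: algebra_simps)
  finally have "b \<le> q' * (c - c * b + b)"
    by (simp add: algebra_simps)
  then show ?thesis
    using pos by (simp add: divide_simps mult.commute)
qed (use assms(4) in simp)

definition valid_lower_bounds :: "nat \<Rightarrow> (nat \<Rightarrow> real) \<Rightarrow> (nat \<Rightarrow> real) \<Rightarrow> bool" where
  "valid_lower_bounds n p b \<longleftrightarrow> (\<forall>x\<in>universe n. 0 \<le> b x \<and> b x \<le> p x)"

context plc_model
begin

lemma valid_lower_bounds_edge_update:
  assumes b: "valid_lower_bounds n p b" and edge: "G_edge n k u (Pr_top n k p u) i j"
    and l: "l \<in> {1..k}" and c: "c = Pr_top n k p u i l / Pr_top n k p u j l"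
  shows "valid_lower_bounds n p
    (if c \<le> 1 then b(j := max (b j) (b i / (c - c * b i + b i))) else b)"
proof (cases "c \<le> 1")
  case True
  have ij: "i \<in> universe n" "j \<in> universe n" "u j < u i"
    using edge unfolding G_edge_def by auto
  have "0 < Pr_top n k p u j l"
    using ij l by (intro Pr_top_pos) auto
  moreover have "Pr_top n k p u i l \<le> Pr_top n k p u j l"
    using True calculation unfolding c by (simp add: divide_le_eq_1)
  then have "p i * (1 - p j) * Pr_top n k p u j l \<le> p j * (1 - p i) * Pr_top n k p u i l"
    using ij l G_edge_imp_less[OF edge] by (intro odds_mult_Pr_top_le) auto
  ultimately have "p i * (1 - p j) \<le> c * p j * (1 - p i)"
    unfolding c by (simp add: divide_simps mult_ac)
  then have "b i / (c - c * b i + b i) \<le> p j"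
    using b ij(1,2) p_range True Pr_top_nonneg unfolding valid_lower_bounds_def c
    by (intro odds_update_le) (auto simp: less_imp_le)
  then show ?thesis
    using b True ij(2) unfolding valid_lower_bounds_def by auto
qed (use b in simp)

lemma valid_lower_bounds_process_edge:
  assumes "valid_lower_bounds n p (fst bt)" "G_edge n k u (Pr_top n k p u) i j"
  shows "valid_lower_bounds n p (fst (process_edge k (Pr_top n k p u) i j bt))"
  unfolding process_edge_def
proof (rule fold_invariant[where Q = "\<lambda>l. l \<in> {1..k}"])
  fix l :: nat and bt :: "(nat \<Rightarrow> real) \<times> nat"
  assume "l \<in> {1..k}" "valid_lower_bounds n p (fst bt)"
  then show "valid_lower_bounds n p (fst ((\<lambda>l (b, t).
      (let c = Pr_top n k p u i l / Pr_top n k p u j l in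
         if c \<le> 1 then b(j := max (b j) (b i / (c - c * b i + b i))) else b,
       t + 1)) l bt))"
    using assms(2) by (cases bt) (simp add: Let_def valid_lower_bounds_edge_update)
qed (use assms(1) in auto)

lemma valid_lower_bounds_process_vertex:
  assumes "valid_lower_bounds n p (fst bt)"
  shows "valid_lower_bounds n p (fst (process_vertex n k u (Pr_top n k p u) i bt))"
  unfolding process_vertex_def
  by (rule fold_invariant[where Q = "G_edge n k u (Pr_top n k p u) i"])
    (use assms valid_lower_bounds_process_edge in auto)

lemma valid_lower_bounds_plc_bounds_alg:
  assumes "1 \<le> \<alpha>" "\<alpha> * real k \<le> (\<Sum>i\<in>universe n. p i)"
  shows "valid_lower_bounds n p (fst (plc_bounds_alg n k u (Pr_top n k p u) \<alpha> ord))"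
proof -
  have "valid_lower_bounds n p (init_bounds k (Pr_top n k p u) \<alpha>)"
    unfolding valid_lower_bounds_def using assms by (simp add: init_bounds_le init_bounds_nonneg)
  show ?thesis
    unfolding plc_bounds_alg_def
    by (rule fold_invariant[where Q = "\<lambda>_. True" and P = "\<lambda>bt. valid_lower_bounds n p (fst bt)"])
      (use \<open>valid_lower_bounds n p (init_bounds k (Pr_top n k p u) \<alpha>)\<close> in
        \<open>auto intro: valid_lower_bounds_process_vertex\<close>)
qed

end

section \<open>Operation count\<close>

lemma snd_fold_le:
  assumes "\<And>x s. x \<in> set xs \<Longrightarrow> snd (f x s) \<le> snd s + d"
  shows "snd (fold f xs s) \<le> snd s + length xs * d"
  using assms
proof (induction xs arbitrary: s)
  case (Cons x xs)
  have "snd (fold f xs (f x s)) \<le> snd (f x s) + length xs * d"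
    using Cons by simp
  also have "\<dots> \<le> snd s + length (x # xs) * d"
    using Cons.prems[of x s] by simp
  finally show ?case
    by simp
qed simp

lemma snd_process_edge_le: "snd (process_edge k Q i j bt) \<le> snd bt + k"
proof -
  have "snd (process_edge k Q i j bt) \<le> snd bt + length [1..<Suc k] * 1"
    unfolding process_edge_def by (rule snd_fold_le) (simp add: split_beta)
  then show ?thesis
    by (simp del: upt_Suc)
qed

lemma snd_process_vertex_le: "snd (process_vertex n k u Q i bt) \<le> snd bt + n + n * k"
proof -
  let ?js = "filter (G_edge n k u Q i) [1..<Suc n]"
  have "snd (process_vertex n k u Q i bt) \<le> snd bt + n + length ?js * k"
    unfolding process_vertex_def
    by (rule order.trans[OF snd_fold_le[where d = k]]) (simp_all add: snd_process_edge_le)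
  moreover have "length ?js \<le> n"
    using length_filter_le[of "G_edge n k u Q i" "[1..<Suc n]"] by (simp del: upt_Suc)
  then have "length ?js * k \<le> n * k"
    by (rule mult_le_mono1)
  ultimately show ?thesis
    by linarith
qed

lemma card_G_edges_le: "card {(i, j). G_edge n k u Q i j} \<le> n * n"
proof -
  have "{(i, j). G_edge n k u Q i j} \<subseteq> universe n \<times> universe n"
    by (auto simp: G_edge_def)
  then show ?thesis
    using card_mono[of "universe n \<times> universe n"] by (simp add: card_cartesian_product)
qed

lemma length_topo_order: "topo_order n k u Q ord \<Longrightarrow> length ord = n"
  unfolding topo_order_def by (metis card_universe distinct_card)

lemma plc_bounds_alg_cost_le:
  assumes "1 \<le> k" "topo_order n k u Q ord"
  shows "snd (plc_bounds_alg n k u Q \<alpha> ord) \<le> 6 * k * n ^ 2"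
proof -
  have "snd (plc_bounds_alg n k u Q \<alpha> ord) \<le> pre_cost n k u Q + length ord * (n + n * k)"
    unfolding plc_bounds_alg_def
    by (rule order.trans[OF snd_fold_le[where d = "n + n * k"]])
      (simp_all add: snd_process_vertex_le add.assoc[symmetric])
  then have "snd (plc_bounds_alg n k u Q \<alpha> ord) \<le> pre_cost n k u Q + n * (n + n * k)"
    using length_topo_order[OF assms(2)] by simp
  also have "\<dots> \<le> 2 * n + 2 * (n * n) + 2 * (n * n * k)"
    unfolding pre_cost_def using card_G_edges_le[of n k u Q] by (simp add: algebra_simps)
  also have "\<dots> \<le> 6 * k * n ^ 2"
  proof -
    have "n \<le> n * n" "n * n \<le> k * (n * n)"
      using assms(1) by (simp_all add: le_square)
    moreover have "6 * k * n ^ 2 = 6 * (k * (n * n))" "n * n * k = k * (n * n)"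
      by (simp_all add: power2_eq_square)
    ultimately show ?thesis
      by linarith
  qed
  finally show ?thesis .
qed

theorem theorem5:
  shows "(\<forall>(n::nat) (k::nat) (p::nat \<Rightarrow> real) (u::nat \<Rightarrow> real) (\<alpha>::real) ord.
            k \<le> n \<longrightarrow> \<alpha> > 1 \<longrightarrow>
            (\<forall>i\<in>universe n. 0 < p i \<and> p i \<le> 1) \<longrightarrow>
            (\<Sum>i\<in>universe n. p i) \<ge> \<alpha> * real k \<longrightarrow>
            topo_order n k u (Pr_top n k p u) ord \<longrightarrow>
            (\<forall>i\<in>universe n. fst (plc_bounds_alg n k u (Pr_top n k p u) \<alpha> ord) i \<le> p i))
       \<and> (\<exists>C::real. \<forall>(n::nat) (k::nat) (u::nat \<Rightarrow> real) (Q::nat \<Rightarrow> nat \<Rightarrow> real) (\<alpha>::real) ord.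
            1 \<le> k \<longrightarrow> k \<le> n \<longrightarrow> topo_order n k u Q ord \<longrightarrow>
            real (snd (plc_bounds_alg n k u Q \<alpha> ord)) \<le> C * real k * real n ^ 2)"
proof (intro conjI allI impI)
  fix n k p u \<alpha> ord
  assume "k \<le> n" "1 < \<alpha>" "\<forall>i\<in>universe n. 0 < p i \<and> p i \<le> 1"
    "\<alpha> * real k \<le> (\<Sum>i\<in>universe n. p i)"
  then have "valid_lower_bounds n p (fst (plc_bounds_alg n k u (Pr_top n k p u) \<alpha> ord))"
    by (intro plc_model.valid_lower_bounds_plc_bounds_alg plc_model.intro) auto
  then show "\<forall>i\<in>universe n. fst (plc_bounds_alg n k u (Pr_top n k p u) \<alpha> ord) i \<le> p i"
    unfolding valid_lower_bounds_def by blast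
next
  have "real (snd (plc_bounds_alg n k u Q \<alpha> ord)) \<le> 6 * real k * real n ^ 2"
    if "1 \<le> k" "topo_order n k u Q ord" for n k u Q \<alpha> ord
  proof -
    have "real (snd (plc_bounds_alg n k u Q \<alpha> ord)) \<le> real (6 * k * n ^ 2)"
      using plc_bounds_alg_cost_le[OF that] by (simp only: of_nat_le_iff)
    then show ?thesis
      by simp
  qed
  then show "\<exists>C::real. \<forall>n k u Q \<alpha> ord. 1 \<le> k \<longrightarrow> k \<le> n \<longrightarrow> topo_order n k u Q ord \<longrightarrow>
      real (snd (plc_bounds_alg n k u Q \<alpha> ord)) \<le> C * real k * real n ^ 2"
    by blast
qed

end
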